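(* Let $n\ge 2$, $b_i>0$, $\alpha_i>0$ for $i=1,\dots,n$ with $\alpha_i\ne\alpha_{i+1}$ for all $i$, and let $g(t)=\sum_{i=1}^n b_ie^{-\alpha_i t}$. Then $$\dot g(t)^2-g(t)\ddot g(t)<0\quad\text{for all } t\ge 0.$$ Consequently, $g\,\mathds{1}_{[0,\infty)}$ is nonnegative but not log-concave; in particular, strongly unimodal LTI systems are not closed under parallel interconnection.
   Context: A function $f:\mathbb{R}\to\mathbb{R}_{\ge0}$ is log-concave if $f(\lambda x+(1-\lambda)y)\ge f(x)^\lambda f(y)^{1-\lambda}$ for all $x,y\in\mathbb{R}$ and $\lambda\in[0,1]$. A causal LTI system with impulse response $g$ maps $u$ to $g\ast u$, $(g\ast u)(t)=\int g(t-\tau)u(\tau)d\tau$; it is strongly unimodal if it maps every quasi-concave (unimodal) function to a quasi-concave function, where $f$ is quasi-concave if $f(\lambda x+(1-\lambda)y)\ge\min\{f(x),f(y)\}$. The parallel interconnection of systems with impulse responses $g_1,g_2$ has impulse response $g_1+g_2$; each first-order system with impulse response $b_ie^{-\alpha_i t}\mathds{1}_{[0,\infty)}$, $b_i,\alpha_i>0$, is strongly unimodal. *)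

theory Defs
  imports "HOL-Analysis.Analysis"
begin

definition log_concave :: "(real \<Rightarrow> real) \<Rightarrow> bool" where
  "log_concave f \<longleftrightarrow> (\<forall>x. 0 \<le> f x) \<and>
     (\<forall>x y lam. 0 \<le> lam \<and> lam \<le> 1 \<longrightarrow>
        f (lam * x + (1 - lam) * y) \<ge> f x powr lam * f y powr (1 - lam))"

end

theory Submission
  imports Defs
begin

text \<open>With the weights \<open>w\<^sub>i = b\<^sub>i exp (-\<alpha>\<^sub>i t) > 0\<close> one has \<open>g = \<Sum> w\<^sub>i\<close>,
  \<open>-g' = \<Sum> w\<^sub>i \<alpha>\<^sub>i\<close> and \<open>g'' = \<Sum> w\<^sub>i \<alpha>\<^sub>i\<^sup>2\<close>, so \<open>g'\<^sup>2 < g g''\<close> is the strict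
  Cauchy--Schwarz inequality for the non-constant family \<open>\<alpha>\<^sub>i\<close>. The same inequality with
  weights \<open>b\<^sub>i\<close> and values \<open>exp (-\<alpha>\<^sub>i)\<close> gives \<open>g(1)\<^sup>2 < g(0) g(2)\<close>, whereas
  log-concavity of \<open>g\<close> times the indicator of \<open>[0,\<infinity>)\<close>, applied at the midpoint 1 of 0 and 2,
  would force \<open>g(0) g(2) \<le> g(1)\<^sup>2\<close>.\<close>

lemma weighted_variance_identity:
  fixes w a :: "'a \<Rightarrow> real"
  shows "2 * ((\<Sum>i\<in>S. w i) * (\<Sum>i\<in>S. w i * (a i)\<^sup>2) - (\<Sum>i\<in>S. w i * a i)\<^sup>2)
    = (\<Sum>i\<in>S. \<Sum>j\<in>S. w i * w j * (a i - a j)\<^sup>2)"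
proof -
  have expand: "w i * w j * (a i - a j)\<^sup>2
      = w j * (w i * (a i)\<^sup>2) + w i * (w j * (a j)\<^sup>2) - 2 * ((w i * a i) * (w j * a j))" for i j
    by (simp add: power2_eq_square algebra_simps)
  have "(\<Sum>i\<in>S. \<Sum>j\<in>S. w j * (w i * (a i)\<^sup>2)) = (\<Sum>i\<in>S. w i) * (\<Sum>i\<in>S. w i * (a i)\<^sup>2)"
    by (simp add: sum_distrib_left sum_distrib_right mult.commute)
  moreover have "(\<Sum>i\<in>S. \<Sum>j\<in>S. w i * (w j * (a j)\<^sup>2)) = (\<Sum>i\<in>S. w i) * (\<Sum>i\<in>S. w i * (a i)\<^sup>2)"
    by (simp add: sum_distrib_left[symmetric] sum_distrib_right[symmetric])
  moreover have "(\<Sum>i\<in>S. \<Sum>j\<in>S. 2 * ((w i * a i) * (w j * a j))) = 2 * (\<Sum>i\<in>S. w i * a i)\<^sup>2"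
    by (simp add: power2_eq_square sum_distrib_left sum_distrib_right mult_ac)
  ultimately show ?thesis
    unfolding expand by (simp only: sum.distrib sum_subtractf) simp
qed

lemma weighted_cauchy_schwarz_strict:
  fixes w a :: "'a \<Rightarrow> real"
  assumes "finite S" "\<And>i. i \<in> S \<Longrightarrow> 0 < w i" "i \<in> S" "j \<in> S" "a i \<noteq> a j"
  shows "(\<Sum>i\<in>S. w i * a i)\<^sup>2 < (\<Sum>i\<in>S. w i) * (\<Sum>i\<in>S. w i * (a i)\<^sup>2)"
proof -
  have nonneg: "0 \<le> w k * w m * (a k - a m)\<^sup>2" if "k \<in> S" "m \<in> S" for k m
    using assms(2)[OF that(1)] assms(2)[OF that(2)] by simp
  have "0 < w i * w j * (a i - a j)\<^sup>2"
    using assms by simp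
  then have "0 < (\<Sum>m\<in>S. w i * w m * (a i - a m)\<^sup>2)"
    using assms(3) nonneg by (intro sum_pos2[OF assms(1) assms(4)]) auto
  then have "0 < (\<Sum>k\<in>S. \<Sum>m\<in>S. w k * w m * (a k - a m)\<^sup>2)"
    by (rule sum_pos2[OF assms(1) assms(3)]) (auto intro: sum_nonneg nonneg)
  then show ?thesis
    using weighted_variance_identity[of w S a] by simp
qed

definition exp_sum :: "'a set \<Rightarrow> ('a \<Rightarrow> real) \<Rightarrow> ('a \<Rightarrow> real) \<Rightarrow> real \<Rightarrow> real" where
  "exp_sum I b \<alpha> t = (\<Sum>i\<in>I. b i * exp (- \<alpha> i * t))"

lemma exp_sum_has_real_derivative:
  "(exp_sum I b \<alpha> has_real_derivative exp_sum I (\<lambda>i. - \<alpha> i * b i) \<alpha> t) (at t)"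
  unfolding exp_sum_def[abs_def]
  by (auto intro!: derivative_eq_intros sum.cong)

lemma deriv_exp_sum: "deriv (exp_sum I b \<alpha>) = exp_sum I (\<lambda>i. - \<alpha> i * b i) \<alpha>"
  using exp_sum_has_real_derivative DERIV_imp_deriv by blast

lemma exp_sum_pos:
  assumes "finite I" "I \<noteq> {}" "\<And>i. i \<in> I \<Longrightarrow> 0 < b i"
  shows "0 < exp_sum I b \<alpha> t"
  unfolding exp_sum_def using assms by (intro sum_pos) auto

lemma exp_sum_deriv_squared_less:
  assumes "finite I" "\<And>i. i \<in> I \<Longrightarrow> 0 < b i" "i \<in> I" "j \<in> I" "\<alpha> i \<noteq> \<alpha> j"
  defines "g \<equiv> exp_sum I b \<alpha>"
  shows "(deriv g t)\<^sup>2 - g t * deriv (deriv g) t < 0"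
proof -
  let ?w = "\<lambda>i. b i * exp (- \<alpha> i * t)"
  have "(\<Sum>i\<in>I. ?w i * \<alpha> i)\<^sup>2 < (\<Sum>i\<in>I. ?w i) * (\<Sum>i\<in>I. ?w i * (\<alpha> i)\<^sup>2)"
    using assms by (intro weighted_cauchy_schwarz_strict) auto
  moreover have "deriv g t = - (\<Sum>i\<in>I. ?w i * \<alpha> i)"
    unfolding g_def deriv_exp_sum exp_sum_def by (simp add: sum_negf[symmetric] algebra_simps)
  moreover have "deriv (deriv g) t = (\<Sum>i\<in>I. ?w i * (\<alpha> i)\<^sup>2)"
    unfolding g_def deriv_exp_sum exp_sum_def
    by (intro sum.cong) (simp_all add: power2_eq_square algebra_simps)
  ultimately show ?thesis
    by (simp add: g_def exp_sum_def)
qed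

lemma exp_sum_squared_less_shifted:
  assumes "finite I" "\<And>i. i \<in> I \<Longrightarrow> 0 < b i" "i \<in> I" "j \<in> I" "\<alpha> i \<noteq> \<alpha> j" "s \<noteq> 0"
  shows "(exp_sum I b \<alpha> t)\<^sup>2 < exp_sum I b \<alpha> (t - s) * exp_sum I b \<alpha> (t + s)"
proof -
  let ?w = "\<lambda>i. b i * exp (- \<alpha> i * (t - s))" and ?a = "\<lambda>i. exp (- \<alpha> i * s)"
  have "(\<Sum>k\<in>I. ?w k * ?a k) = exp_sum I b \<alpha> t"
    unfolding exp_sum_def by (intro sum.cong) (simp_all add: mult.assoc exp_add[symmetric] algebra_simps)
  moreover have "(\<Sum>k\<in>I. ?w k * (?a k)\<^sup>2) = exp_sum I b \<alpha> (t + s)"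
    unfolding exp_sum_def
    by (intro sum.cong) (simp_all add: power2_eq_square mult.assoc exp_add[symmetric] algebra_simps)
  moreover have "(\<Sum>k\<in>I. ?w k * ?a k)\<^sup>2 < (\<Sum>k\<in>I. ?w k) * (\<Sum>k\<in>I. ?w k * (?a k)\<^sup>2)"
    using assms by (intro weighted_cauchy_schwarz_strict[of I ?w i j ?a]) auto
  ultimately show ?thesis
    unfolding exp_sum_def by simp
qed

lemma log_concave_midpoint:
  assumes "log_concave f"
  shows "f x * f y \<le> (f ((x + y) / 2))\<^sup>2"
proof -
  have nonneg: "0 \<le> f z" for z
    using assms unfolding log_concave_def by blast
  have "f x powr lam * f y powr (1 - lam) \<le> f (lam * x + (1 - lam) * y)"
    if "0 \<le> lam" "lam \<le> 1" for lam
    using assms that unfolding log_concave_def by blast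
  from this[of "1/2"] have "f x powr (1/2) * f y powr (1/2) \<le> f ((x + y) / 2)"
    by (simp add: add_divide_distrib)
  then have "sqrt (f x * f y) \<le> f ((x + y) / 2)"
    using nonneg by (simp add: powr_half_sqrt real_sqrt_mult)
  then have "(sqrt (f x * f y))\<^sup>2 \<le> (f ((x + y) / 2))\<^sup>2"
    using nonneg[of x] nonneg[of y] by (intro power_mono) auto
  then show ?thesis
    using nonneg[of x] nonneg[of y] by simp
qed

theorem lemma6:
  fixes n :: nat and b \<alpha> :: "nat \<Rightarrow> real" and g :: "real \<Rightarrow> real"
  assumes "n \<ge> 2"
    and "\<forall>i\<in>{1..n}. b i > 0"
    and "\<forall>i\<in>{1..n}. \<alpha> i > 0"
    and "\<forall>i\<in>{1..<n}. \<alpha> i \<noteq> \<alpha> (Suc i)"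
    and "g = (\<lambda>t. \<Sum>i=1..n. b i * exp (- \<alpha> i * t))"
  shows "(\<forall>t\<ge>0. (deriv g t)\<^sup>2 - g t * deriv (deriv g) t < 0)
    \<and> (\<forall>t. 0 \<le> indicator {0..} t * g t)
    \<and> \<not> log_concave (\<lambda>t. indicator {0..} t * g t)"
proof -
  have g: "g = exp_sum {1..n} b \<alpha>"
    using assms(5) by (simp add: exp_sum_def[abs_def])
  have in_range: "1 \<in> {1..n}" "2 \<in> {1..n}"
    using assms(1) by auto
  have distinct: "\<alpha> 1 \<noteq> \<alpha> 2"
    using assms(1,4) by (simp add: numeral_2_eq_2)
  have pos: "\<And>i. i \<in> {1..n} \<Longrightarrow> 0 < b i"
    using assms(2) by blast
  have "(deriv g t)\<^sup>2 - g t * deriv (deriv g) t < 0" for t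
    unfolding g using pos in_range distinct by (intro exp_sum_deriv_squared_less) auto
  moreover have "0 < g t" for t
    unfolding g using pos in_range by (intro exp_sum_pos) auto
  moreover have "(g 1)\<^sup>2 < g 0 * g 2"
    using exp_sum_squared_less_shifted[of "{1..n}" b 1 2 \<alpha> 1 1] pos in_range distinct
    by (simp add: g)
  moreover have "log_concave (\<lambda>t. indicator {0..} t * g t) \<Longrightarrow> g 0 * g 2 \<le> (g 1)\<^sup>2"
    using log_concave_midpoint[of _ 0 2] by fastforce
  ultimately show ?thesis
    by (auto simp: less_imp_le not_le[symmetric])
qed

end
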